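(* Let $q\in\mathbb C\setminus\{0\}$ with $q^2\ne1$, $n\ge1$, $\eta_1,\dots,\eta_n\in\mathbb C\setminus\{0\}$ and $\alpha_1,\dots,\alpha_n\in\mathbb Z_{\ge0}$, such that all denominators below are nonzero. Then $$\sum_{a=1}^{n}[\alpha_a]\prod_{i\ne a}\frac{q^{\alpha_a}\eta_i/\eta_a-\eta_a/(q^{\alpha_a}\eta_i)}{q^{\alpha_a-\alpha_i}\eta_i/\eta_a-\eta_a/(q^{\alpha_a-\alpha_i}\eta_i)}=\Big[\sum_{a=1}^n\alpha_a\Big],$$ where $[r]=(q^r-q^{-r})/(q-q^{-1})$. *)

theory Defs
  imports Complex_Main
begin

definition qnum :: "complex \<Rightarrow> int \<Rightarrow> complex" where
  "qnum q r = (q powi r - q powi (- r)) / (q - inverse q)"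

end

theory Submission
  imports Defs
begin

(*
  Put Q_i = q^(alpha_i), x_i = eta_i^2 and z_i = (eta_i / Q_i)^2.  A direct
  computation turns the i-th factor of the a-th product into
      Q_i^-1 * (z_a - x_i) / (z_a - z_i),
  so the a-th product equals Q_a / Q * L_a, where Q = q^(sum alpha) = prod Q_i and
  L_a = prod_{i<>a} (z_a - x_i)/(z_a - z_i) is a Lagrange-type coefficient.
  The partial fraction expansion of the rational function prod_i (w - x_i)/(w - z_i),
  evaluated at w = 0, yields  sum_a (x_a/z_a - 1) L_a = prod_i x_i/z_i - 1, i.e.
      sum_a (Q_a^2 - 1) L_a = Q^2 - 1.
  Since [alpha_a] Q_a = (Q_a^2 - 1)/(q - q^-1), multiplying by 1/((q - q^-1) Q) gives the
  claimed value [sum alpha].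
*)

text \<open>The coefficient of the simple pole at z a in the partial fraction expansion of
  the product of the ratios (w - x i) / (w - z i), up to the factor z a - x a.\<close>
definition lagrange_coeff :: "('i \<Rightarrow> complex) \<Rightarrow> ('i \<Rightarrow> complex) \<Rightarrow> 'i set \<Rightarrow> 'i \<Rightarrow> complex" where
  "lagrange_coeff x z S a = (\<Prod>i\<in>S - {a}. (z a - x i) / (z a - z i))"

lemma two_pole_identity:
  fixes w u v y :: complex
  assumes "w \<noteq> u" "w \<noteq> v" "u \<noteq> v"
  shows "(w - y) / ((w - u) * (w - v)) = (u - y) / ((w - u) * (u - v)) + (v - y) / ((w - v) * (v - u))"
proof -
  have "v - u \<noteq> 0" "w - u \<noteq> 0" "w - v \<noteq> 0" "u - v \<noteq> 0" using assms by auto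
  then show ?thesis by (simp add: divide_simps) (simp add: algebra_simps)
qed

lemma lagrange_coeff_insert:
  assumes "finite S" "b \<notin> S" "a \<in> S"
  shows "lagrange_coeff x z (insert b S) a = (z a - x b) / (z a - z b) * lagrange_coeff x z S a"
proof -
  have "insert b S - {a} = insert b (S - {a})" using assms by auto
  then show ?thesis unfolding lagrange_coeff_def using assms by (simp add: prod.insert_if)
qed

lemma prod_ratio_partial_fractions:
  fixes x z :: "'i \<Rightarrow> complex"
  assumes "finite S" and "inj_on z S" and "w \<notin> z ` S"
  shows "(\<Prod>i\<in>S. (w - x i) / (w - z i)) =
         1 + (\<Sum>a\<in>S. (z a - x a) / (w - z a) * lagrange_coeff x z S a)"
  using assms
proof (induction S arbitrary: w rule: finite_induct)
  case empty
  then show ?case by simp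
next
  case (insert b S)
  define c where "c a = (z a - x a) * lagrange_coeff x z S a" for a
  have inj: "inj_on z S" and zb: "z b \<notin> z ` S" using insert by auto
  have wb: "w \<noteq> z b" and wS: "w \<notin> z ` S" using insert.prems by auto
  have IH_w: "(\<Prod>i\<in>S. (w - x i) / (w - z i)) = 1 + (\<Sum>a\<in>S. c a / (w - z a))"
    using insert.IH[OF inj wS] by (simp add: c_def)
  have coeff_b: "lagrange_coeff x z (insert b S) b = 1 + (\<Sum>a\<in>S. c a / (z b - z a))"
    using insert.IH[OF inj zb] insert.hyps by (simp add: c_def lagrange_coeff_def)
  have pole: "c a / (w - z a) * ((w - x b) / (w - z b)) =
      c a / (w - z a) * ((z a - x b) / (z a - z b)) + (z b - x b) / (w - z b) * (c a / (z b - z a))"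
    if "a \<in> S" for a
  proof -
    have "z a \<noteq> z b" "w \<noteq> z a" using that zb wS by (auto simp: image_iff)
    have "c a / (w - z a) * ((w - x b) / (w - z b)) = c a * ((w - x b) / ((w - z a) * (w - z b)))"
      by simp
    also have "\<dots> = c a * ((z a - x b) / ((w - z a) * (z a - z b)) + (z b - x b) / ((w - z b) * (z b - z a)))"
      using two_pole_identity[OF \<open>w \<noteq> z a\<close> wb \<open>z a \<noteq> z b\<close>] by simp
    finally show ?thesis by (simp add: distrib_left mult_ac)
  qed
  have "(\<Prod>i\<in>insert b S. (w - x i) / (w - z i))
      = (1 + (\<Sum>a\<in>S. c a / (w - z a))) * ((w - x b) / (w - z b))"
    using insert.hyps IH_w by (simp add: mult.commute)
  also have "\<dots> = (w - x b) / (w - z b) + (\<Sum>a\<in>S. c a / (w - z a) * ((w - x b) / (w - z b)))"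
    by (simp only: distrib_right sum_distrib_right mult_1_left)
  also have "\<dots> = (w - x b) / (w - z b) + (\<Sum>a\<in>S. c a / (w - z a) * ((z a - x b) / (z a - z b)))
      + (z b - x b) / (w - z b) * (\<Sum>a\<in>S. c a / (z b - z a))"
    by (simp only: sum.cong[OF refl pole] sum.distrib sum_distrib_left add.assoc)
  also have "(w - x b) / (w - z b) = 1 + (z b - x b) / (w - z b)"
    using wb by (simp add: field_simps)
  also have "1 + (z b - x b) / (w - z b) + (\<Sum>a\<in>S. c a / (w - z a) * ((z a - x b) / (z a - z b)))
      + (z b - x b) / (w - z b) * (\<Sum>a\<in>S. c a / (z b - z a))
    = 1 + (\<Sum>a\<in>insert b S. (z a - x a) / (w - z a) * lagrange_coeff x z (insert b S) a)"
    using insert.hyps by (simp add: coeff_b lagrange_coeff_insert c_def distrib_left add_divide_distrib mult_ac add_ac)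
  finally show ?case .
qed

text \<open>Evaluation of the expansion at w = 0: the weighted sum of the coefficients.\<close>
lemma lagrange_weighted_sum:
  fixes x z :: "'i \<Rightarrow> complex"
  assumes "finite S" and "inj_on z S" and "0 \<notin> z ` S"
  shows "(\<Sum>a\<in>S. (x a / z a - 1) * lagrange_coeff x z S a) = (\<Prod>i\<in>S. x i / z i) - 1"
proof -
  have "(\<Sum>a\<in>S. (x a / z a - 1) * lagrange_coeff x z S a)
      = (\<Sum>a\<in>S. (z a - x a) / (0 - z a) * lagrange_coeff x z S a)"
  proof (rule sum.cong[OF refl])
    fix a assume "a \<in> S"
    then have "z a \<noteq> 0" using assms(3) by force
    then show "(x a / z a - 1) * lagrange_coeff x z S a = (z a - x a) / (0 - z a) * lagrange_coeff x z S a"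
      by (simp add: field_simps)
  qed
  also have "\<dots> = (\<Prod>i\<in>S. (0 - x i) / (0 - z i)) - 1"
    using prod_ratio_partial_fractions[OF assms] by simp
  finally show ?thesis by simp
qed

lemma ratio_as_lagrange_factor:
  fixes q ea ei :: complex and ka ki :: nat
  assumes "q \<noteq> 0" "ea \<noteq> 0" "ei \<noteq> 0"
    and D: "q powi (int ka - int ki) * ei / ea - ea / (q powi (int ka - int ki) * ei) \<noteq> 0"
  shows "(q ^ ka * ei / ea - ea / (q ^ ka * ei)) /
           (q powi (int ka - int ki) * ei / ea - ea / (q powi (int ka - int ki) * ei))
         = inverse (q ^ ki) * (((ea / q ^ ka)^2 - ei^2) / ((ea / q ^ ka)^2 - (ei / q ^ ki)^2))"
    and "(ea / q ^ ka)^2 \<noteq> (ei / q ^ ki)^2"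
proof -
  define Qa Qi where "Qa = q ^ ka" and "Qi = q ^ ki"
  have nz: "Qa \<noteq> 0" "Qi \<noteq> 0" using assms(1) by (simp_all add: Qa_def Qi_def)
  have pw: "q powi (int ka - int ki) = Qa / Qi"
    using assms(1) by (simp add: power_int_diff Qa_def Qi_def)
  have "(Qa / Qi) * ei / ea - ea / ((Qa / Qi) * ei) = (Qa^2 * ei^2 - Qi^2 * ea^2) / (Qa * Qi * ei * ea)"
    using nz assms(2,3) by (simp add: field_simps power2_eq_square)
  then have D': "Qa^2 * ei^2 - Qi^2 * ea^2 \<noteq> 0" using D by (auto simp: pw)
  show "(ea / q ^ ka)^2 \<noteq> (ei / q ^ ki)^2"
    using D' nz unfolding Qa_def[symmetric] Qi_def[symmetric] by (auto simp: field_simps)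
  show "(q ^ ka * ei / ea - ea / (q ^ ka * ei)) /
           (q powi (int ka - int ki) * ei / ea - ea / (q powi (int ka - int ki) * ei))
         = inverse (q ^ ki) * (((ea / q ^ ka)^2 - ei^2) / ((ea / q ^ ka)^2 - (ei / q ^ ki)^2))"
    unfolding pw Qa_def[symmetric] Qi_def[symmetric]
    using nz assms(2,3) D' by (simp add: field_simps power2_eq_square)
qed

lemma product_as_lagrange_coeff:
  fixes q :: complex and \<eta> :: "'i \<Rightarrow> complex" and \<alpha> :: "'i \<Rightarrow> nat"
  assumes "finite S" "a \<in> S" "q \<noteq> 0" "\<And>i. i \<in> S \<Longrightarrow> \<eta> i \<noteq> 0"
    and "\<And>i. i \<in> S \<Longrightarrow> i \<noteq> a \<Longrightarrow>
      q powi (int (\<alpha> a) - int (\<alpha> i)) * \<eta> i / \<eta> a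
        - \<eta> a / (q powi (int (\<alpha> a) - int (\<alpha> i)) * \<eta> i) \<noteq> 0"
  shows "(\<Prod>i\<in>S - {a}.
            (q ^ (\<alpha> a) * \<eta> i / \<eta> a - \<eta> a / (q ^ (\<alpha> a) * \<eta> i)) /
            (q powi (int (\<alpha> a) - int (\<alpha> i)) * \<eta> i / \<eta> a
               - \<eta> a / (q powi (int (\<alpha> a) - int (\<alpha> i)) * \<eta> i)))
       = q ^ \<alpha> a / q ^ (\<Sum>i\<in>S. \<alpha> i)
           * lagrange_coeff (\<lambda>i. \<eta> i ^ 2) (\<lambda>i. (\<eta> i / q ^ \<alpha> i) ^ 2) S a"
proof -
  have "(\<Prod>i\<in>S - {a}.
            (q ^ (\<alpha> a) * \<eta> i / \<eta> a - \<eta> a / (q ^ (\<alpha> a) * \<eta> i)) /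
            (q powi (int (\<alpha> a) - int (\<alpha> i)) * \<eta> i / \<eta> a
               - \<eta> a / (q powi (int (\<alpha> a) - int (\<alpha> i)) * \<eta> i)))
       = (\<Prod>i\<in>S - {a}. inverse (q ^ \<alpha> i)
            * (((\<eta> a / q ^ \<alpha> a)^2 - \<eta> i ^ 2) / ((\<eta> a / q ^ \<alpha> a)^2 - (\<eta> i / q ^ \<alpha> i)^2)))"
    using ratio_as_lagrange_factor(1)[OF assms(3,4,4) assms(5)] assms(2) by (intro prod.cong) auto
  also have "\<dots> = (\<Prod>i\<in>S - {a}. inverse (q ^ \<alpha> i))
      * lagrange_coeff (\<lambda>i. \<eta> i ^ 2) (\<lambda>i. (\<eta> i / q ^ \<alpha> i) ^ 2) S a"
    unfolding lagrange_coeff_def by (rule prod.distrib)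
  also have "(\<Prod>i\<in>S - {a}. inverse (q ^ \<alpha> i)) = q ^ \<alpha> a / q ^ (\<Sum>i\<in>S. \<alpha> i)"
  proof -
    have "q ^ (\<Sum>i\<in>S. \<alpha> i) = q ^ \<alpha> a * (\<Prod>i\<in>S - {a}. q ^ \<alpha> i)"
      using assms(1,2) by (simp add: power_sum prod.remove)
    moreover have "(\<Prod>i\<in>S - {a}. inverse (q ^ \<alpha> i)) = inverse (\<Prod>i\<in>S - {a}. q ^ \<alpha> i)"
      using prod_inversef[of "\<lambda>i. q ^ \<alpha> i" "S - {a}"] by (simp add: comp_def)
    ultimately show ?thesis using assms(3) by (simp add: field_simps)
  qed
  finally show ?thesis .
qed

text \<open>[m] q^m = (q^(2m) - 1) / (q - q^-1); this also holds when q^2 = 1, both sides being 0.\<close>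
lemma qnum_times_power:
  fixes q :: complex
  assumes "q \<noteq> 0"
  shows "qnum q (int m) * q ^ m = ((q ^ m)^2 - 1) / (q - inverse q)"
proof -
  have "(q ^ m - inverse (q ^ m)) * q ^ m = (q ^ m)^2 - 1"
    using assms by (simp add: power2_eq_square algebra_simps)
  then show ?thesis by (simp add: qnum_def power_int_minus)
qed

lemma qnum_from_weights:
  fixes q :: complex and k :: "'i \<Rightarrow> nat" and R :: "'i \<Rightarrow> complex"
  assumes "q \<noteq> 0"
    and "(\<Sum>a\<in>S. ((q ^ k a)^2 - 1) * R a) = (q ^ (\<Sum>a\<in>S. k a))^2 - 1"
  shows "(\<Sum>a\<in>S. qnum q (int (k a)) * (q ^ k a / q ^ (\<Sum>a\<in>S. k a) * R a))
       = qnum q (int (\<Sum>a\<in>S. k a))"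
proof -
  define Q where "Q = q ^ (\<Sum>a\<in>S. k a)"
  have "Q \<noteq> 0" using assms(1) by (simp add: Q_def)
  have "(\<Sum>a\<in>S. qnum q (int (k a)) * (q ^ k a / Q * R a))
      = (\<Sum>a\<in>S. ((q ^ k a)^2 - 1) * R a) / ((q - inverse q) * Q)"
    unfolding sum_divide_distrib
  proof (intro sum.cong refl)
    fix a
    have "qnum q (int (k a)) * (q ^ k a / Q * R a) = qnum q (int (k a)) * q ^ k a * R a / Q"
      by simp
    then show "qnum q (int (k a)) * (q ^ k a / Q * R a) = ((q ^ k a)^2 - 1) * R a / ((q - inverse q) * Q)"
      unfolding qnum_times_power[OF assms(1)] by simp
  qed
  also have "\<dots> = qnum q (int (\<Sum>a\<in>S. k a)) * Q / Q"
    unfolding assms(2) Q_def[symmetric] qnum_times_power[OF assms(1), of "\<Sum>a\<in>S. k a", folded Q_def] by simp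
  finally show ?thesis using \<open>Q \<noteq> 0\<close> assms(1) by (simp add: Q_def del: of_nat_sum)
qed

lemma lagrange_power_weights:
  fixes q :: complex and \<eta> :: "'i \<Rightarrow> complex" and \<alpha> :: "'i \<Rightarrow> nat"
  assumes "finite S" "q \<noteq> 0" "\<And>i. i \<in> S \<Longrightarrow> \<eta> i \<noteq> 0"
    and "inj_on (\<lambda>i. (\<eta> i / q ^ \<alpha> i) ^ 2) S"
  shows "(\<Sum>a\<in>S. ((q ^ \<alpha> a)^2 - 1) * lagrange_coeff (\<lambda>i. \<eta> i ^ 2) (\<lambda>i. (\<eta> i / q ^ \<alpha> i) ^ 2) S a)
       = (q ^ (\<Sum>a\<in>S. \<alpha> a))^2 - 1"
proof -
  have "0 \<notin> (\<lambda>i. (\<eta> i / q ^ \<alpha> i) ^ 2) ` S" using assms(2,3) by auto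
  moreover have "\<eta> i ^ 2 / (\<eta> i / q ^ \<alpha> i) ^ 2 = (q ^ \<alpha> i)^2" if "i \<in> S" for i
    using assms(2) assms(3)[OF that] by (simp add: field_simps)
  ultimately show ?thesis
    using lagrange_weighted_sum[OF assms(1,4), of "\<lambda>i. \<eta> i ^ 2"]
    by (simp add: power_sum prod_power_distrib[symmetric])
qed

lemma qnum_product_sum_as_lagrange_sum:
  fixes q :: complex and \<eta> :: "'i \<Rightarrow> complex" and \<alpha> :: "'i \<Rightarrow> nat"
  assumes "finite S" "q \<noteq> 0" "\<And>i. i \<in> S \<Longrightarrow> \<eta> i \<noteq> 0"
    and "\<And>a i. a \<in> S \<Longrightarrow> i \<in> S \<Longrightarrow> i \<noteq> a \<Longrightarrow>
      q powi (int (\<alpha> a) - int (\<alpha> i)) * \<eta> i / \<eta> a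
        - \<eta> a / (q powi (int (\<alpha> a) - int (\<alpha> i)) * \<eta> i) \<noteq> 0"
  shows "(\<Sum>a\<in>S. qnum q (int (\<alpha> a)) *
            (\<Prod>i\<in>S - {a}.
               (q ^ (\<alpha> a) * \<eta> i / \<eta> a - \<eta> a / (q ^ (\<alpha> a) * \<eta> i)) /
               (q powi (int (\<alpha> a) - int (\<alpha> i)) * \<eta> i / \<eta> a
                  - \<eta> a / (q powi (int (\<alpha> a) - int (\<alpha> i)) * \<eta> i))))
      = (\<Sum>a\<in>S. qnum q (int (\<alpha> a)) * (q ^ \<alpha> a / q ^ (\<Sum>a\<in>S. \<alpha> a)
            * lagrange_coeff (\<lambda>i. \<eta> i ^ 2) (\<lambda>i. (\<eta> i / q ^ \<alpha> i) ^ 2) S a))"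
    (is "sum ?lhs S = sum ?rhs S")
proof (rule sum.cong[OF refl])
  fix a assume a: "a \<in> S"
  show "?lhs a = ?rhs a"
    using product_as_lagrange_coeff[where \<eta> = \<eta> and \<alpha> = \<alpha>, OF assms(1) a assms(2,3) assms(4)[OF a]]
    by simp
qed

theorem mainTheorem6:
  fixes q :: complex and n :: nat and \<eta> :: "nat \<Rightarrow> complex" and \<alpha> :: "nat \<Rightarrow> nat"
  assumes "q \<noteq> 0" and "q^2 \<noteq> 1" and "n \<ge> 1"
    and "\<And>i. i \<in> {1..n} \<Longrightarrow> \<eta> i \<noteq> 0"
    and "\<And>a i. a \<in> {1..n} \<Longrightarrow> i \<in> {1..n} \<Longrightarrow> i \<noteq> a \<Longrightarrow>
      q powi (int (\<alpha> a) - int (\<alpha> i)) * \<eta> i / \<eta> a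
        - \<eta> a / (q powi (int (\<alpha> a) - int (\<alpha> i)) * \<eta> i) \<noteq> 0"
  shows "(\<Sum>a=1..n. qnum q (int (\<alpha> a)) *
            (\<Prod>i\<in>{1..n} - {a}.
               (q ^ (\<alpha> a) * \<eta> i / \<eta> a - \<eta> a / (q ^ (\<alpha> a) * \<eta> i)) /
               (q powi (int (\<alpha> a) - int (\<alpha> i)) * \<eta> i / \<eta> a
                  - \<eta> a / (q powi (int (\<alpha> a) - int (\<alpha> i)) * \<eta> i))))
         = qnum q (int (\<Sum>a=1..n. \<alpha> a))"
proof -
  define S where "S = {1..n}"
  have fin: "finite S" and \<eta>_nz: "\<And>i. i \<in> S \<Longrightarrow> \<eta> i \<noteq> 0"
    using assms(4) by (simp_all add: S_def)
  have denom_nz: "\<And>a i. a \<in> S \<Longrightarrow> i \<in> S \<Longrightarrow> i \<noteq> a \<Longrightarrow>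
      q powi (int (\<alpha> a) - int (\<alpha> i)) * \<eta> i / \<eta> a
        - \<eta> a / (q powi (int (\<alpha> a) - int (\<alpha> i)) * \<eta> i) \<noteq> 0"
    using assms(5) by (simp add: S_def)
  have "inj_on (\<lambda>i. (\<eta> i / q ^ \<alpha> i) ^ 2) S"
    using ratio_as_lagrange_factor(2)[OF assms(1) \<eta>_nz \<eta>_nz denom_nz]
    by (auto simp: inj_on_def)
  then have weights: "(\<Sum>a\<in>S. ((q ^ \<alpha> a)^2 - 1)
        * lagrange_coeff (\<lambda>i. \<eta> i ^ 2) (\<lambda>i. (\<eta> i / q ^ \<alpha> i) ^ 2) S a)
      = (q ^ (\<Sum>a\<in>S. \<alpha> a))^2 - 1"
    using lagrange_power_weights[OF fin assms(1) \<eta>_nz] by simp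
  show ?thesis
    unfolding S_def[symmetric]
    using qnum_product_sum_as_lagrange_sum[OF fin assms(1) \<eta>_nz denom_nz]
      qnum_from_weights[OF assms(1) weights]
    by simp
qed

end
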